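(* Let $G$ be a connected graph, let $L$ be a list-assignment with $|L(u)|\ge\deg(u)+1$ for all $u\in V(G)$, and let $\alpha,\beta$ be two unfrozen $L$-colourings. For each vertex $w$, there exists a recolouring sequence $\mathcal{S}$ from $\alpha$ to some $L$-colouring $\gamma$ such that (i) either $\gamma(w)=\beta(w)$, or there is precisely one vertex $x\in N(w)$ with $\gamma(x)=\beta(w)$ and both $w$ and $x$ are frozen under $\gamma$; and (ii) $|\mathcal{S}|\le\deg(w)+2$, with equality only if $\gamma(w)=\beta(w)$.
   Context: An $L$-colouring is a proper colouring $\varphi$ with $\varphi(v)\in L(v)$ for all $v$. A recolouring sequence is a sequence of single-vertex recolouring steps, each changing the colour of one vertex to another colour of its list so that the colouring remains proper; $|\mathcal{S}|$ is its number of steps. A vertex $u$ is frozen under $\varphi$ if every colour of $L(u)\setminus\{\varphi(u)\}$ appears on a neighbour of $u$; a colouring is unfrozen if at least one vertex is unfrozen under it. *)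

theory Defs
  imports Main
begin

definition simple_graph :: "'v set \<Rightarrow> ('v \<Rightarrow> 'v \<Rightarrow> bool) \<Rightarrow> bool" where
  "simple_graph V E \<longleftrightarrow> finite V \<and>
     (\<forall>u v. E u v \<longrightarrow> u \<in> V \<and> v \<in> V \<and> u \<noteq> v \<and> E v u)"

definition connected_graph :: "'v set \<Rightarrow> ('v \<Rightarrow> 'v \<Rightarrow> bool) \<Rightarrow> bool" where
  "connected_graph V E \<longleftrightarrow> (\<forall>u\<in>V. \<forall>v\<in>V. E\<^sup>*\<^sup>* u v)"

definition nbrs :: "'v set \<Rightarrow> ('v \<Rightarrow> 'v \<Rightarrow> bool) \<Rightarrow> 'v \<Rightarrow> 'v set" where
  "nbrs V E u = {v \<in> V. E u v}"

definition deg :: "'v set \<Rightarrow> ('v \<Rightarrow> 'v \<Rightarrow> bool) \<Rightarrow> 'v \<Rightarrow> nat" where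
  "deg V E u = card (nbrs V E u)"

definition L_colouring :: "'v set \<Rightarrow> ('v \<Rightarrow> 'v \<Rightarrow> bool) \<Rightarrow> ('v \<Rightarrow> 'c set) \<Rightarrow> ('v \<Rightarrow> 'c) \<Rightarrow> bool" where
  "L_colouring V E L \<phi> \<longleftrightarrow> (\<forall>v\<in>V. \<phi> v \<in> L v) \<and> (\<forall>u\<in>V. \<forall>v\<in>V. E u v \<longrightarrow> \<phi> u \<noteq> \<phi> v)"

definition recol_step :: "'v set \<Rightarrow> ('v \<Rightarrow> 'v \<Rightarrow> bool) \<Rightarrow> ('v \<Rightarrow> 'c set) \<Rightarrow> ('v \<Rightarrow> 'c) \<Rightarrow> ('v \<Rightarrow> 'c) \<Rightarrow> bool" where
  "recol_step V E L \<phi> \<psi> \<longleftrightarrow> (\<exists>v\<in>V. \<exists>c\<in>L v. c \<noteq> \<phi> v \<and> \<psi> = \<phi>(v := c)) \<and> L_colouring V E L \<psi>"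

inductive recol_seq :: "'v set \<Rightarrow> ('v \<Rightarrow> 'v \<Rightarrow> bool) \<Rightarrow> ('v \<Rightarrow> 'c set) \<Rightarrow> ('v \<Rightarrow> 'c) \<Rightarrow> ('v \<Rightarrow> 'c) \<Rightarrow> nat \<Rightarrow> bool"
  for V E L where
  refl: "L_colouring V E L \<phi> \<Longrightarrow> recol_seq V E L \<phi> \<phi> 0"
| step: "recol_seq V E L \<phi> \<psi> n \<Longrightarrow> recol_step V E L \<psi> \<chi> \<Longrightarrow> recol_seq V E L \<phi> \<chi> (Suc n)"

definition frozen :: "'v set \<Rightarrow> ('v \<Rightarrow> 'v \<Rightarrow> bool) \<Rightarrow> ('v \<Rightarrow> 'c set) \<Rightarrow> ('v \<Rightarrow> 'c) \<Rightarrow> 'v \<Rightarrow> bool" where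
  "frozen V E L \<phi> u \<longleftrightarrow> (\<forall>c \<in> L u - {\<phi> u}. \<exists>x \<in> nbrs V E u. \<phi> x = c)"

definition unfrozen_colouring :: "'v set \<Rightarrow> ('v \<Rightarrow> 'v \<Rightarrow> bool) \<Rightarrow> ('v \<Rightarrow> 'c set) \<Rightarrow> ('v \<Rightarrow> 'c) \<Rightarrow> bool" where
  "unfrozen_colouring V E L \<phi> \<longleftrightarrow> (\<exists>u\<in>V. \<not> frozen V E L \<phi> u)"

end

theory Submission
  imports Defs
begin

text \<open>
  Let \<open>c = \<beta> w\<close> and let \<open>S\<close> be the set of neighbours of \<open>w\<close> coloured \<open>c\<close>.
  While some vertex of \<open>S\<close> is unfrozen, recolour it away from \<open>c\<close>; each such step shrinks \<open>S\<close>.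
  Once every vertex of \<open>S\<close> is frozen, the list sizes force each frozen vertex to see pairwise
  distinct colours on its neighbourhood. If \<open>w\<close> is frozen as well, \<open>S\<close> is therefore a single
  vertex and we stop with a frozen pair. Otherwise move \<open>w\<close> to a free colour, recolour all of
  the independent set \<open>S\<close> to the old colour of \<open>w\<close> (now free at each of its vertices), and
  finally give \<open>w\<close> the colour \<open>c\<close>: this takes \<open>|S| + 2\<close> steps.
\<close>

definition frozen_conflict ::
    "'v set \<Rightarrow> ('v \<Rightarrow> 'v \<Rightarrow> bool) \<Rightarrow> ('v \<Rightarrow> 'c set) \<Rightarrow> ('v \<Rightarrow> 'c) \<Rightarrow> 'v \<Rightarrow> 'c \<Rightarrow> bool" where
  "frozen_conflict V E L \<phi> w c \<longleftrightarrow>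
     (\<exists>x. x \<in> nbrs V E w \<and> \<phi> x = c \<and> (\<forall>y\<in>nbrs V E w. \<phi> y = c \<longrightarrow> y = x) \<and>
          frozen V E L \<phi> w \<and> frozen V E L \<phi> x)"

lemma simple_graph_adj:
  assumes "simple_graph V E" "E u v"
  shows "u \<in> V" "v \<in> V" "u \<noteq> v" "E v u"
  using assms unfolding simple_graph_def by blast+

lemma finite_nbrs: "simple_graph V E \<Longrightarrow> finite (nbrs V E u)"
  unfolding simple_graph_def nbrs_def by simp

lemma recol_seq_L_colouring: "recol_seq V E L \<phi> \<psi> n \<Longrightarrow> L_colouring V E L \<psi>"
  by (induction rule: recol_seq.induct) (auto simp: recol_step_def)

lemma recol_seq_trans:
  "recol_seq V E L \<psi> \<chi> n \<Longrightarrow> recol_seq V E L \<phi> \<psi> m \<Longrightarrow> recol_seq V E L \<phi> \<chi> (m + n)"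
  by (induction rule: recol_seq.induct) (auto intro: recol_seq.step)

lemma recol_seq_fun_upd:
  assumes "simple_graph V E" "L_colouring V E L \<phi>"
    and "v \<in> V" "c \<in> L v" "c \<noteq> \<phi> v" "\<forall>z\<in>nbrs V E v. \<phi> z \<noteq> c"
  shows "recol_seq V E L \<phi> (\<phi>(v := c)) 1"
proof -
  have "L_colouring V E L (\<phi>(v := c))"
    unfolding L_colouring_def
  proof (intro conjI ballI impI)
    fix x y assume "x \<in> V" "y \<in> V" "E x y"
    then show "(\<phi>(v := c)) x \<noteq> (\<phi>(v := c)) y"
      using assms(2,6) simple_graph_adj[OF assms(1) \<open>E x y\<close>]
      unfolding L_colouring_def nbrs_def by auto
  qed (use assms(2,4) in \<open>auto simp: L_colouring_def\<close>)
  then have "recol_step V E L \<phi> (\<phi>(v := c))"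
    using assms(3-5) unfolding recol_step_def by blast
  then show ?thesis
    using recol_seq.step[OF recol_seq.refl[OF assms(2)]] by simp
qed

lemma frozen_bij_betw_nbrs:
  assumes "simple_graph V E" "finite (L u)" "card (L u) \<ge> deg V E u + 1" "\<phi> u \<in> L u"
    and "frozen V E L \<phi> u"
  shows "bij_betw \<phi> (nbrs V E u) (L u - {\<phi> u})"
proof -
  have fin: "finite (nbrs V E u)" using assms(1) by (rule finite_nbrs)
  have sub: "L u - {\<phi> u} \<subseteq> \<phi> ` nbrs V E u"
    using assms(5) unfolding frozen_def by force
  have "card (nbrs V E u) \<le> card (L u - {\<phi> u})"
    using assms(2-4) by (simp add: card_Diff_singleton deg_def)
  moreover have "card (L u - {\<phi> u}) \<le> card (\<phi> ` nbrs V E u)"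
    using sub fin by (simp add: card_mono)
  moreover have "card (\<phi> ` nbrs V E u) \<le> card (nbrs V E u)"
    using fin by (rule card_image_le)
  ultimately have eq: "card (\<phi> ` nbrs V E u) = card (nbrs V E u)"
    "card (L u - {\<phi> u}) = card (\<phi> ` nbrs V E u)"
    by linarith+
  show ?thesis
    unfolding bij_betw_def
    using eq_card_imp_inj_on[OF fin eq(1)] card_subset_eq[OF finite_imageI[OF fin] sub eq(2)]
    by simp
qed

lemma recol_seq_recolour_independent_set:
  assumes "simple_graph V E" "L_colouring V E L \<phi>" "finite S" "S \<subseteq> V"
    and "\<forall>y\<in>S. a \<in> L y \<and> \<phi> y \<noteq> a \<and> (\<forall>z\<in>nbrs V E y. \<phi> z \<noteq> a)"
    and "\<forall>y\<in>S. \<forall>z\<in>S. \<not> E y z"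
  shows "recol_seq V E L \<phi> (\<lambda>v. if v \<in> S then a else \<phi> v) (card S)"
  using assms(3-6)
proof (induction S rule: finite_induct)
  case empty
  then show ?case using recol_seq.refl[OF assms(2)] by simp
next
  case (insert y S)
  let ?\<phi>S = "\<lambda>v. if v \<in> S then a else \<phi> v"
  have IH: "recol_seq V E L \<phi> ?\<phi>S (card S)" using insert by auto
  have "\<forall>z\<in>nbrs V E y. ?\<phi>S z \<noteq> a" using insert.prems unfolding nbrs_def by auto
  then have "recol_seq V E L ?\<phi>S (?\<phi>S(y := a)) 1"
    using insert recol_seq_fun_upd[OF assms(1) recol_seq_L_colouring[OF IH]] by auto
  from recol_seq_trans[OF this IH]
  have "recol_seq V E L \<phi> (?\<phi>S(y := a)) (Suc (card S))" by simp
  moreover have "?\<phi>S(y := a) = (\<lambda>v. if v \<in> insert y S then a else \<phi> v)" by auto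
  ultimately show ?case using insert.hyps by simp
qed


lemma frozen_conflict_if_frozen:
  assumes "simple_graph V E" "finite (L w)" "card (L w) \<ge> deg V E w + 1"
    and "L_colouring V E L \<phi>" "w \<in> V" "c \<in> L w" "c \<noteq> \<phi> w" "frozen V E L \<phi> w"
    and "\<forall>x\<in>nbrs V E w. \<phi> x = c \<longrightarrow> frozen V E L \<phi> x"
  shows "frozen_conflict V E L \<phi> w c"
proof -
  have "bij_betw \<phi> (nbrs V E w) (L w - {\<phi> w})"
    using assms(4,5) frozen_bij_betw_nbrs[OF assms(1-3) _ assms(8)]
    unfolding L_colouring_def by blast
  moreover have "c \<in> L w - {\<phi> w}" using assms(6,7) by blast
  ultimately obtain x where "x \<in> nbrs V E w" "\<phi> x = c" "\<forall>y\<in>nbrs V E w. \<phi> y = c \<longrightarrow> y = x"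
    unfolding bij_betw_def inj_on_def by (metis imageE)
  then show ?thesis
    using assms(8,9) unfolding frozen_conflict_def by blast
qed

lemma recolour_unfrozen_nbr:
  assumes "simple_graph V E" "L_colouring V E L \<phi>"
    and "x \<in> nbrs V E w" "\<phi> x = c" "\<not> frozen V E L \<phi> x"
  obtains \<phi>' where "recol_seq V E L \<phi> \<phi>' 1"
    and "card {y \<in> nbrs V E w. \<phi>' y = c} < card {y \<in> nbrs V E w. \<phi> y = c}"
proof -
  obtain e where e: "e \<in> L x" "e \<noteq> \<phi> x" "\<forall>z\<in>nbrs V E x. \<phi> z \<noteq> e"
    using assms(5) unfolding frozen_def by blast
  have "x \<in> V" using assms(3) unfolding nbrs_def by simp
  have "{y \<in> nbrs V E w. (\<phi>(x := e)) y = c} = {y \<in> nbrs V E w. \<phi> y = c} - {x}"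
    using e(2) assms(4) by auto
  moreover have "card ({y \<in> nbrs V E w. \<phi> y = c} - {x}) < card {y \<in> nbrs V E w. \<phi> y = c}"
    using assms(3,4) finite_nbrs[OF assms(1)] by (intro card_Diff1_less) auto
  ultimately show thesis
    using that recol_seq_fun_upd[OF assms(1,2) \<open>x \<in> V\<close> e] by simp
qed

lemma recolour_via_frozen_class:
  assumes sg: "simple_graph V E" and lists: "\<forall>u\<in>V. finite (L u) \<and> card (L u) \<ge> deg V E u + 1"
    and col: "L_colouring V E L \<phi>" and w: "w \<in> V" and c: "c \<in> L w"
    and "\<not> frozen V E L \<phi> w" and "\<exists>x\<in>nbrs V E w. \<phi> x = c"
    and frozen_class: "\<forall>x\<in>nbrs V E w. \<phi> x = c \<longrightarrow> frozen V E L \<phi> x"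
  obtains \<gamma> where "recol_seq V E L \<phi> \<gamma> (card {x \<in> nbrs V E w. \<phi> x = c} + 2)" "\<gamma> w = c"
proof -
  define S where "S = {x \<in> nbrs V E w. \<phi> x = c}"
  have proper: "\<phi> u \<noteq> \<phi> v" if "E u v" for u v
    using col that simple_graph_adj(1,2)[OF sg that] unfolding L_colouring_def by blast
  have "finite S"
    using finite_nbrs[OF sg] unfolding S_def by simp
  moreover have "S \<subseteq> V" "w \<notin> S" "\<forall>y\<in>S. \<forall>z\<in>S. \<not> E y z"
    using simple_graph_adj(3)[OF sg] unfolding S_def nbrs_def by (auto dest: proper)
  ultimately have S: "finite S" "S \<subseteq> V" "w \<notin> S" "\<forall>y\<in>S. \<forall>z\<in>S. \<not> E y z"
    by blast+
  have "c \<noteq> \<phi> w" using assms(7) proper unfolding nbrs_def by force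
  obtain d where d: "d \<in> L w" "d \<noteq> \<phi> w" "\<forall>z\<in>nbrs V E w. \<phi> z \<noteq> d"
    using assms(6) unfolding frozen_def by blast
  have "d \<noteq> c" using d(3) assms(7) by blast
  define \<psi> where "\<psi> = \<phi>(w := d)"
  have seq1: "recol_seq V E L \<phi> \<psi> 1"
    unfolding \<psi>_def using recol_seq_fun_upd[OF sg col w d] .
  have free: "\<phi> w \<in> L y \<and> \<psi> y \<noteq> \<phi> w \<and> (\<forall>z\<in>nbrs V E y. \<psi> z \<noteq> \<phi> w)" if "y \<in> S" for y
  proof -
    have y: "y \<in> V" "w \<in> nbrs V E y" "\<phi> y = c" "y \<noteq> w"
      using that w simple_graph_adj[OF sg] unfolding S_def nbrs_def by auto
    have "frozen V E L \<phi> y" using frozen_class that unfolding S_def by blast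
    moreover have "\<phi> y \<in> L y" using col y(1) unfolding L_colouring_def by blast
    ultimately have "bij_betw \<phi> (nbrs V E y) (L y - {\<phi> y})"
      using frozen_bij_betw_nbrs[OF sg] lists y(1) by blast
    then have "\<phi> w \<in> L y" "\<forall>z\<in>nbrs V E y. z \<noteq> w \<longrightarrow> \<phi> z \<noteq> \<phi> w"
      using y(2) unfolding bij_betw_def inj_on_def by auto
    then show ?thesis
      using y \<open>c \<noteq> \<phi> w\<close> d(2) unfolding \<psi>_def by auto
  qed
  define \<chi> where "\<chi> = (\<lambda>v. if v \<in> S then \<phi> w else \<psi> v)"
  have seq2: "recol_seq V E L \<psi> \<chi> (card S)"
    unfolding \<chi>_def
    using recol_seq_recolour_independent_set[OF sg recol_seq_L_colouring[OF seq1] S(1,2) _ S(4)] free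
    by blast
  have "\<chi> w = d" "\<forall>z\<in>nbrs V E w. \<chi> z \<noteq> c"
    using S(3) \<open>c \<noteq> \<phi> w\<close> simple_graph_adj(3)[OF sg]
    unfolding \<chi>_def \<psi>_def S_def nbrs_def by auto
  then have seq3: "recol_seq V E L \<chi> (\<chi>(w := c)) 1"
    using recol_seq_fun_upd[OF sg recol_seq_L_colouring[OF seq2] w c] \<open>d \<noteq> c\<close> by simp
  show thesis
    using that[of "\<chi>(w := c)"] recol_seq_trans[OF seq3 recol_seq_trans[OF seq2 seq1]]
    unfolding S_def by simp
qed

lemma recolour_vertex_or_frozen_conflict:
  assumes sg: "simple_graph V E" and lists: "\<forall>u\<in>V. finite (L u) \<and> card (L u) \<ge> deg V E u + 1"
    and "L_colouring V E L \<phi>" and w: "w \<in> V" and c: "c \<in> L w"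
  shows "\<exists>\<gamma> n. recol_seq V E L \<phi> \<gamma> n \<and>
     (\<gamma> w = c \<and> n \<le> card {x \<in> nbrs V E w. \<phi> x = c} + 2 \<or>
      frozen_conflict V E L \<gamma> w c \<and> n \<le> card {x \<in> nbrs V E w. \<phi> x = c})"
  using assms(3)
proof (induction "card {x \<in> nbrs V E w. \<phi> x = c}" arbitrary: \<phi> rule: less_induct)
  case less
  note col = less.prems
  consider (coloured) "\<phi> w = c"
    | (direct) "\<phi> w \<noteq> c" "\<forall>x\<in>nbrs V E w. \<phi> x \<noteq> c"
    | (unfrozen_nbr) x where "x \<in> nbrs V E w" "\<phi> x = c" "\<not> frozen V E L \<phi> x"
    | (conflict) "\<phi> w \<noteq> c" "frozen V E L \<phi> w"
        "\<forall>x\<in>nbrs V E w. \<phi> x = c \<longrightarrow> frozen V E L \<phi> x"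
    | (frozen_class) "\<not> frozen V E L \<phi> w" "\<exists>x\<in>nbrs V E w. \<phi> x = c"
        "\<forall>x\<in>nbrs V E w. \<phi> x = c \<longrightarrow> frozen V E L \<phi> x"
    by blast
  then show ?case
  proof cases
    case coloured
    then show ?thesis using recol_seq.refl[OF col] by fastforce
  next
    case direct
    then have "recol_seq V E L \<phi> (\<phi>(w := c)) 1"
      using recol_seq_fun_upd[OF sg col w c] by simp
    then show ?thesis by fastforce
  next
    case unfrozen_nbr
    then obtain \<phi>' where seq: "recol_seq V E L \<phi> \<phi>' 1"
      and fewer: "card {y \<in> nbrs V E w. \<phi>' y = c} < card {y \<in> nbrs V E w. \<phi> y = c}"
      by (rule recolour_unfrozen_nbr[OF sg col])
    obtain \<gamma> n where "recol_seq V E L \<phi>' \<gamma> n"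
      "\<gamma> w = c \<and> n \<le> card {x \<in> nbrs V E w. \<phi>' x = c} + 2 \<or>
       frozen_conflict V E L \<gamma> w c \<and> n \<le> card {x \<in> nbrs V E w. \<phi>' x = c}"
      using less.hyps[OF fewer recol_seq_L_colouring[OF seq]] by blast
    then show ?thesis
      using recol_seq_trans[OF _ seq] fewer by (intro exI[of _ \<gamma>] exI[of _ "1 + n"]) auto
  next
    case conflict
    then show ?thesis
      using frozen_conflict_if_frozen[OF sg _ _ col w c] lists w recol_seq.refl[OF col]
      by fastforce
  next
    case frozen_class
    then obtain \<gamma> where "recol_seq V E L \<phi> \<gamma> (card {x \<in> nbrs V E w. \<phi> x = c} + 2)" "\<gamma> w = c"
      by (rule recolour_via_frozen_class[OF sg lists col w c])
    then show ?thesis by fastforce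
  qed
qed

theorem mainTheorem6:
  fixes V :: "'v set" and E :: "'v \<Rightarrow> 'v \<Rightarrow> bool" and L :: "'v \<Rightarrow> 'c set"
    and \<alpha> \<beta> :: "'v \<Rightarrow> 'c" and w :: 'v
  assumes "simple_graph V E" and "connected_graph V E"
    and "\<forall>u\<in>V. finite (L u) \<and> card (L u) \<ge> deg V E u + 1"
    and "L_colouring V E L \<alpha>" and "L_colouring V E L \<beta>"
    and "unfrozen_colouring V E L \<alpha>" and "unfrozen_colouring V E L \<beta>"
    and "w \<in> V"
  shows "\<exists>\<gamma> n. recol_seq V E L \<alpha> \<gamma> n \<and>
           (\<gamma> w = \<beta> w \<or>
            (\<exists>x. x \<in> nbrs V E w \<and> \<gamma> x = \<beta> w \<and>
                 (\<forall>y\<in>nbrs V E w. \<gamma> y = \<beta> w \<longrightarrow> y = x) \<and>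
                 frozen V E L \<gamma> w \<and> frozen V E L \<gamma> x)) \<and>
           n \<le> deg V E w + 2 \<and> (n = deg V E w + 2 \<longrightarrow> \<gamma> w = \<beta> w)"
proof -
  let ?k = "card {x \<in> nbrs V E w. \<alpha> x = \<beta> w}"
  have "\<beta> w \<in> L w" using assms(5,8) unfolding L_colouring_def by blast
  then obtain \<gamma> n where seq: "recol_seq V E L \<alpha> \<gamma> n"
    and outcome: "\<gamma> w = \<beta> w \<and> n \<le> ?k + 2 \<or> frozen_conflict V E L \<gamma> w (\<beta> w) \<and> n \<le> ?k"
    using recolour_vertex_or_frozen_conflict[OF assms(1,3,4,8)] by blast
  have "?k \<le> deg V E w"
    unfolding deg_def by (intro card_mono finite_nbrs[OF assms(1)]) auto
  with seq outcome show ?thesis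
    unfolding frozen_conflict_def by (intro exI[of _ \<gamma>] exI[of _ n]) auto
qed

end
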